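(* Consider Method 1.1 (described in the context) applied to the problem $\min\{f(x):x\in D\}$. Suppose the method does not terminate, the generated sequence $\{y_i\}_{i\in K}$ is bounded, and the numbers $\varepsilon_k$ are chosen so that $\varepsilon_k>0$ for all $k\in K$ and $\varepsilon_k\to0$ as $k\to\infty$. Then (the sequence $\{x_k\}_{k\in K}$ is defined for all $k$ and) every limit point of $\{x_k\}_{k\in K}$ belongs to $X^*$; and if moreover $f(x_{k+1})\ge f(x_k)$ for all $k\in K$, then $\operatorname{dist}(x_k,X^* )\to0$ as $k\to\infty$.
   Context: Setting: $f_j$, $j\in J=\{1,\dots,m\}$, are convex functions on $\mathbb{R}^n$; $D=\{x:f_j(x)\le0,\ j\in J\}$; $f$ is continuous on $\mathbb{R}^n$ and attains its minimum on $D$; each $D_j=\{x:f_j(x)\le0\}$ has nonempty interior. Notation: $K=\{0,1,2,\dots\}$; $F(x)=\max_{j}f_j(x)$; $D_\varepsilon=\{x:F(x)\le\varepsilon\}$; $f^*=\min_D f$; $X^*=\{x\in D: f(x)=f^*\}$; $E^*=\{x: f(x)\le f^*\}$; $W^1(x,D_j)=\{a\in\mathbb{R}^n:\|a\|=1,\ \langle a,z-x\rangle\le0\ \forall z\in D_j\}$. Method 1.1: Fix $x^*\in X^*$. Choose a closed convex $M_0\subset\mathbb{R}^n$ with $x^*\in M_0$, points $v^j\in\operatorname{int}D_j$ ($j\in J$), a number $\varepsilon_0\ge0$, and a constant $q\in[1,\infty)$; set $k=0$, $i=0$. Step 1: choose $y_i\in M_i\cap E^*$. Step 2: let $J_i=\{j\in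 J: y_i\notin D_j\}$; if $J_i=\emptyset$, stop. Step 3: if $y_i\notin D_{\varepsilon_k}$, choose a closed convex $G_i\subset\mathbb{R}^n$ with $x^*\in G_i$ and set $Q_i=M_i\cap G_i$; otherwise set $i_k=i$, $x_k=y_{i_k}$, choose a closed convex $Q_i$ with $x^*\in Q_i$, choose $\varepsilon_{k+1}\ge0$ and increase $k$ by one. Step 4: for each $j\in J_i$ choose $z_i^j$ in the open segment $(v^j,y_i)$ with $z_i^j\notin\operatorname{int}D_j$ such that for some $q_i^j\in[1,q]$ the point $y_i+q_i^j(z_i^j-y_i)$ lies in $D_j$; for $j\in J\setminus J_i$ set $z_i^j=y_i$. Step 5: choose $H_i\subset J_i$ containing an index $j_i$ with $\|y_i-z_i^{j_i}\|=\max_{j\in J_i}\|y_i-z_i^j\|$. Step 6: for each $j\in H_i$ choose a nonempty finite set $A_i^j\subset W^1(z_i^j,D_j)$, set $M_{i+1}=Q_i\cap\{x:\langle a,x-z_i^j\rangle\le0\ \forall j\in H_i,\ a\in A_i^j\}$, increase $i$ by one and go to Step 1. *)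

theory Defs
  imports "HOL-Analysis.Analysis"
begin

definition Jset :: "nat \<Rightarrow> nat set" where
  "Jset m = {1..m}"

definition Dj :: "(nat \<Rightarrow> 'a \<Rightarrow> real) \<Rightarrow> nat \<Rightarrow> 'a set" where
  "Dj fs j = {x. fs j x \<le> 0}"

definition Dfeas :: "(nat \<Rightarrow> 'a \<Rightarrow> real) \<Rightarrow> nat \<Rightarrow> 'a set" where
  "Dfeas fs m = {x. \<forall>j\<in>Jset m. fs j x \<le> 0}"

definition Fmax :: "(nat \<Rightarrow> 'a \<Rightarrow> real) \<Rightarrow> nat \<Rightarrow> 'a \<Rightarrow> real" where
  "Fmax fs m x = Max ((\<lambda>j. fs j x) ` Jset m)"

definition Deps :: "(nat \<Rightarrow> 'a \<Rightarrow> real) \<Rightarrow> nat \<Rightarrow> real \<Rightarrow> 'a set" where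
  "Deps fs m \<epsilon> = {x. Fmax fs m x \<le> \<epsilon>}"

definition fstar :: "('a \<Rightarrow> real) \<Rightarrow> (nat \<Rightarrow> 'a \<Rightarrow> real) \<Rightarrow> nat \<Rightarrow> real" where
  "fstar f fs m = Inf (f ` Dfeas fs m)"

definition Xstar :: "('a \<Rightarrow> real) \<Rightarrow> (nat \<Rightarrow> 'a \<Rightarrow> real) \<Rightarrow> nat \<Rightarrow> 'a set" where
  "Xstar f fs m = {x \<in> Dfeas fs m. f x = fstar f fs m}"

definition Estar :: "('a \<Rightarrow> real) \<Rightarrow> (nat \<Rightarrow> 'a \<Rightarrow> real) \<Rightarrow> nat \<Rightarrow> 'a set" where
  "Estar f fs m = {x. f x \<le> fstar f fs m}"

definition W1 :: "'a::real_inner \<Rightarrow> 'a set \<Rightarrow> 'a set" where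
  "W1 x S = {a. norm a = 1 \<and> (\<forall>z\<in>S. inner a (z - x) \<le> 0)}"

end

theory Submission
  imports Defs
begin

(*
  Every cut of Step 6 is deep: a ball of fixed radius around v^j lies in D_j, so
  the supporting half-space at z_i^j keeps later iterates at a distance from y_i
  proportional to the cut depth |y_i - z_i^{j_i}|. If k stopped increasing, all
  later iterates would lie in the nested sets M_i, so boundedness of (y_i) would
  make the cut depths arbitrarily small. But then y_i is not eps_k-feasible for
  the frozen k, and by uniform continuity of the f_j a shallow cut could not
  reach D_j; so the depths are bounded below. Hence every x_k exists; x_k is
  eps_k-feasible with f(x_k) <= f*, so by continuity every limit point is
  optimal, and boundedness turns this into convergence of the distance from x_k
  to X^* to zero.
*)

lemma W1_inner_lower_bound:
  fixes a v y z :: "'a::real_inner"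
  assumes ball: "cball v e \<subseteq> S" "e > 0"
    and a: "a \<in> W1 z S"
    and z: "z \<in> open_segment v y"
    and C: "norm (y - v) \<le> C" "C > 0"
  shows "e / C * norm (y - z) \<le> inner a (y - z)"
proof -
  obtain t where t: "0 < t" "t < 1" and z_eq: "z = (1 - t) *\<^sub>R v + t *\<^sub>R y"
    using z by (auto simp: in_segment)
  have yz: "y - z = (1 - t) *\<^sub>R (y - v)" and vz: "v - z = - t *\<^sub>R (y - v)"
    using z_eq by (simp_all add: algebra_simps)
  have norm_a: "norm a = 1" and supp: "\<And>u. u \<in> S \<Longrightarrow> inner a (u - z) \<le> 0"
    using a by (auto simp: W1_def)
  have "v + e *\<^sub>R a \<in> S"
    using ball norm_a by (intro subsetD[OF ball(1)]) (simp add: dist_norm)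
  then have "inner a (v - z) + e \<le> 0"
    using supp[of "v + e *\<^sub>R a"] norm_a
    by (simp add: algebra_simps flip: power2_norm_eq_inner)
  then have te: "e \<le> t * inner a (y - v)"
    using vz by simp
  then have "e \<le> inner a (y - v)"
    using t ball(2) by (smt (verit) mult_le_cancel_right1 mult_nonneg_nonpos)
  have "e / C * norm (y - v) \<le> e / C * C"
    using C ball(2) by (intro mult_left_mono) auto
  then have "e / C * norm (y - v) \<le> e"
    using C by simp
  have "e / C * norm (y - z) = (1 - t) * (e / C * norm (y - v))"
    using yz t by simp
  also have "\<dots> \<le> (1 - t) * e"
    using \<open>e / C * norm (y - v) \<le> e\<close> t by (intro mult_left_mono) auto
  also have "\<dots> \<le> (1 - t) * inner a (y - v)"
    using \<open>e \<le> inner a (y - v)\<close> t by simp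
  also have "\<dots> = inner a (y - z)"
    using yz by simp
  finally show ?thesis .
qed

lemma bounded_seq_separation_small:
  fixes y :: "nat \<Rightarrow> 'a::heine_borel"
  assumes "bounded (range y)" "c > 0" "\<delta> > 0"
    and sep: "\<And>l i. N \<le> l \<Longrightarrow> l < i \<Longrightarrow> c * d l \<le> dist (y l) (y i)"
  shows "\<exists>l\<ge>N. d l < \<delta>"
proof -
  have "bounded (range (\<lambda>n. y (N + n)))"
    using assms(1) by (rule bounded_subset) auto
  then obtain p r where r: "strict_mono r" "((\<lambda>n. y (N + n)) \<circ> r) \<longlonglongrightarrow> p"
    using bounded_imp_convergent_subsequence by blast
  then have "Cauchy ((\<lambda>n. y (N + n)) \<circ> r)"
    by (intro LIMSEQ_imp_Cauchy)
  moreover have "c * \<delta> > 0"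
    using assms(2,3) by simp
  ultimately obtain K where K: "\<forall>i\<ge>K. \<forall>j\<ge>K. dist (y (N + r i)) (y (N + r j)) < c * \<delta>"
    by (auto dest: metric_CauchyD)
  have "c * d (N + r K) \<le> dist (y (N + r K)) (y (N + r (Suc K)))"
    using r(1) by (intro sep) (auto simp: strict_mono_Suc_iff)
  also have "\<dots> < c * \<delta>"
    using K by (simp add: le_SucI)
  finally show ?thesis
    using assms(2) by (intro exI[of _ "N + r K"]) simp
qed

lemma finite_common_cball_in_interior:
  assumes "finite J" "\<And>j. j \<in> J \<Longrightarrow> a j \<in> interior (S j)"
  shows "\<exists>e>0. \<forall>j\<in>J. cball (a j) e \<subseteq> S j"
  using assms
proof (induction J rule: finite_induct)
  case empty
  show ?case by (auto intro: exI[of _ 1])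
next
  case (insert j J)
  then obtain e where e: "e > 0" "\<forall>j\<in>J. cball (a j) e \<subseteq> S j"
    by blast
  obtain e' where "e' > 0" "cball (a j) e' \<subseteq> S j"
    using insert.prems mem_interior_cball by blast
  with e show ?case
    by (intro exI[of _ "min e e'"]) (auto simp: subset_iff)
qed

lemma uniform_modulus_near_compact:
  fixes g :: "'a::heine_borel \<Rightarrow> 'b::metric_space"
  assumes "compact T" "continuous_on UNIV g" "e > 0"
  shows "\<exists>d>0. \<forall>u\<in>T. \<forall>w. dist u w < d \<longrightarrow> dist (g u) (g w) < e"
proof -
  obtain a R where R: "T \<subseteq> cball a R"
    using compact_imp_bounded[OF assms(1)] by (auto simp: bounded_subset_cball)
  have "uniformly_continuous_on (cball a (R + 1)) g"
    by (rule compact_uniformly_continuous[OF continuous_on_subset[OF assms(2)]]) auto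
  then obtain d where d: "d > 0"
    "\<And>u w. u \<in> cball a (R + 1) \<Longrightarrow> w \<in> cball a (R + 1) \<Longrightarrow> dist w u < d \<Longrightarrow> dist (g w) (g u) < e"
    using assms(3) by (rule uniformly_continuous_onE) blast
  have near: "u \<in> cball a (R + 1)" "w \<in> cball a (R + 1)" if "u \<in> T" "dist u w < 1" for u w
    using R that dist_triangle[of a w u] by (auto simp: dist_commute)
  have "dist (g u) (g w) < e" if "u \<in> T" "dist u w < min d 1" for u w
    using d(2)[of u w] near[of u w] that by (simp add: dist_commute)
  then show ?thesis
    using d(1) by (intro exI[of _ "min d 1"]) auto
qed

lemma finite_uniform_modulus_near_compact:
  fixes g :: "nat \<Rightarrow> 'a::heine_borel \<Rightarrow> 'b::metric_space"
  assumes "finite J" "compact T" "\<And>j. j \<in> J \<Longrightarrow> continuous_on UNIV (g j)" "e > 0"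
  shows "\<exists>d>0. \<forall>j\<in>J. \<forall>u\<in>T. \<forall>w. dist u w < d \<longrightarrow> dist (g j u) (g j w) < e"
  using assms(1,3)
proof (induction J rule: finite_induct)
  case empty
  show ?case by (auto intro: exI[of _ 1])
next
  case (insert j J)
  then obtain d where d: "d > 0" "\<forall>j\<in>J. \<forall>u\<in>T. \<forall>w. dist u w < d \<longrightarrow> dist (g j u) (g j w) < e"
    by blast
  obtain d' where "d' > 0" "\<forall>u\<in>T. \<forall>w. dist u w < d' \<longrightarrow> dist (g j u) (g j w) < e"
    using uniform_modulus_near_compact[OF assms(2) _ assms(4)] insert.prems by blast
  with d show ?case
    by (intro exI[of _ "min d d'"]) (simp add: ball_simps(7))
qed

lemma finite_Jset: "finite (Jset m)"
  by (simp add: Jset_def)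

lemma Fmax_ge: "j \<in> Jset m \<Longrightarrow> fs j u \<le> Fmax fs m u"
  unfolding Fmax_def by (intro Max_ge) (auto simp: finite_Jset)

lemma Fmax_gt_imp_ex:
  assumes "Jset m \<noteq> {}" "Fmax fs m u > e"
  shows "\<exists>j\<in>Jset m. fs j u > e"
  using assms by (auto simp: Fmax_def finite_Jset Max_gr_iff)

lemma LIMSEQ_in_Xstar:
  assumes cont: "\<And>j. j \<in> Jset m \<Longrightarrow> continuous_on UNIV (fs j)" "continuous_on UNIV f"
    and bdd: "bdd_below (f ` Dfeas fs m)"
    and u: "\<And>k. u k \<in> Deps fs m (e k) \<inter> Estar f fs m" "u \<longlonglongrightarrow> p"
    and e: "e \<longlonglongrightarrow> 0"
  shows "p \<in> Xstar f fs m"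
proof -
  have "fs j p \<le> 0" if "j \<in> Jset m" for j
  proof (rule LIMSEQ_le)
    show "(\<lambda>k. fs j (u k)) \<longlonglongrightarrow> fs j p"
      by (rule continuous_on_tendsto_compose[OF cont(1)[OF that] u(2)]) simp_all
    have "fs j (u k) \<le> e k" for k
      using Fmax_ge[OF that, of fs "u k"] u(1)[of k] by (simp add: Deps_def)
    then show "\<exists>N. \<forall>k\<ge>N. fs j (u k) \<le> e k"
      by blast
  qed (rule e)
  then have p_feasible: "p \<in> Dfeas fs m"
    by (simp add: Dfeas_def)
  have "(\<lambda>k. f (u k)) \<longlonglongrightarrow> f p"
    by (rule continuous_on_tendsto_compose[OF cont(2) u(2)]) simp_all
  then have "f p \<le> fstar f fs m"
    using u(1) by (intro LIMSEQ_le_const2) (auto simp: Estar_def)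
  moreover have "fstar f fs m \<le> f p"
    unfolding fstar_def using p_feasible bdd by (intro cInf_lower) auto
  ultimately show ?thesis
    using p_feasible by (simp add: Xstar_def)
qed

lemma infdist_tendsto_0_if_subseq_limits_in:
  fixes u :: "nat \<Rightarrow> 'a::heine_borel"
  assumes "bounded (range u)"
    and limits: "\<And>r p. strict_mono r \<Longrightarrow> (u \<circ> r) \<longlonglongrightarrow> p \<Longrightarrow> p \<in> S"
  shows "(\<lambda>k. infdist (u k) S) \<longlonglongrightarrow> 0"
proof (rule ccontr)
  assume "\<not> (\<lambda>k. infdist (u k) S) \<longlonglongrightarrow> 0"
  then obtain e where "e > 0" and "\<not> (\<forall>\<^sub>F k in sequentially. infdist (u k) S < e)"
    by (auto simp: tendsto_iff infdist_nonneg)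
  then have far: "infinite {k. e \<le> infdist (u k) S}"
    by (simp add: cofinite_eq_sequentially[symmetric] eventually_cofinite not_less)
  define r where "r = enumerate {k. e \<le> infdist (u k) S}"
  have r: "strict_mono r" "\<And>n. e \<le> infdist (u (r n)) S"
    using strict_mono_enumerate[OF far] enumerate_in_set[OF far] by (auto simp: r_def)
  have "bounded (range (u \<circ> r))"
    using assms(1) by (rule bounded_subset) auto
  then obtain p r' where r': "strict_mono r'" "(u \<circ> r \<circ> r') \<longlonglongrightarrow> p"
    using bounded_imp_convergent_subsequence by blast
  have "p \<in> S"
    using limits[of "r \<circ> r'"] r(1) r' by (simp add: strict_mono_o o_assoc)
  then have "(\<lambda>n. infdist ((u \<circ> r \<circ> r') n) S) \<longlonglongrightarrow> 0"
    using tendsto_infdist[OF r'(2), of S] by simp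
  then have "e \<le> 0"
    using r(2) by (intro LIMSEQ_le_const) auto
  with \<open>e > 0\<close> show False
    by simp
qed

text \<open>A run of Method 1.1 reduced to what the convergence proof uses; kk i is the value
  of the counter k when y i is generated.\<close>

locale cutting_plane_run =
  fixes fs :: "nat \<Rightarrow> 'a::euclidean_space \<Rightarrow> real" and m :: nat
    and v :: "nat \<Rightarrow> 'a" and q :: real and eps :: "nat \<Rightarrow> real"
    and M Q :: "nat \<Rightarrow> 'a set" and y :: "nat \<Rightarrow> 'a"
    and kk :: "nat \<Rightarrow> nat" and x :: "nat \<Rightarrow> 'a"
    and z :: "nat \<Rightarrow> nat \<Rightarrow> 'a" and qq :: "nat \<Rightarrow> nat \<Rightarrow> real"
    and H :: "nat \<Rightarrow> nat set" and jsel :: "nat \<Rightarrow> nat" and A :: "nat \<Rightarrow> nat \<Rightarrow> 'a set"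
  assumes convex_constraints: "\<And>j. j \<in> Jset m \<Longrightarrow> convex_on UNIV (fs j)"
    and v_interior: "\<And>j. j \<in> Jset m \<Longrightarrow> v j \<in> interior (Dj fs j)"
    and q_ge_1: "q \<ge> 1"
    and kk_0: "kk 0 = 0"
    and y_in_M: "\<And>i. y i \<in> M i"
    and rejected: "\<And>i. y i \<notin> Deps fs m (eps (kk i)) \<Longrightarrow> Q i \<subseteq> M i \<and> kk (Suc i) = kk i"
    and accepted: "\<And>i. y i \<in> Deps fs m (eps (kk i)) \<Longrightarrow> x (kk i) = y i \<and> kk (Suc i) = Suc (kk i)"
    and z_step: "\<And>i j. j \<in> Jset m \<Longrightarrow> y i \<notin> Dj fs j \<Longrightarrow>
        z i j \<in> open_segment (v j) (y i) \<and> 1 \<le> qq i j \<and> qq i j \<le> q \<and>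
        y i + qq i j *\<^sub>R (z i j - y i) \<in> Dj fs j"
    and jsel_farthest: "\<And>i. H i \<subseteq> {j \<in> Jset m. y i \<notin> Dj fs j} \<and> jsel i \<in> H i \<and>
        (\<forall>j \<in> {j \<in> Jset m. y i \<notin> Dj fs j}. norm (y i - z i j) \<le> norm (y i - z i (jsel i)))"
    and cuts: "\<And>i j. j \<in> H i \<Longrightarrow> A i j \<noteq> {} \<and> A i j \<subseteq> W1 (z i j) (Dj fs j)"
    and M_Suc: "\<And>i. M (Suc i) \<subseteq> Q i \<inter> {p. \<forall>j\<in>H i. \<forall>a\<in>A i j. inner a (p - z i j) \<le> 0}"
    and y_bounded: "bounded (range y)"
    and eps_pos: "\<And>k. eps k > 0"
begin

lemma jsel_violated: "jsel i \<in> Jset m" "y i \<notin> Dj fs (jsel i)"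
  using jsel_farthest[of i] by auto

lemma Jset_nonempty: "Jset m \<noteq> {}"
  using jsel_violated by blast

lemma continuous_constraint: "j \<in> Jset m \<Longrightarrow> continuous_on UNIV (fs j)"
  using convex_constraints by (intro convex_on_continuous) auto

lemma kk_Suc: "kk (Suc i) = kk i \<or> kk (Suc i) = Suc (kk i)"
  using rejected[of i] accepted[of i] by blast

lemma incseq_kk: "incseq kk"
  using kk_Suc by (intro incseq_SucI) (metis le_SucI order_refl)

lemma accepted_iterate:
  assumes "k < kk i"
  shows "\<exists>i'. x k = y i' \<and> y i' \<in> Deps fs m (eps k)"
  using assms
proof (induction i)
  case 0
  then show ?case by (simp add: kk_0)
next
  case (Suc i)
  show ?case
  proof (cases "k < kk i")
    case True
    then show ?thesis by (rule Suc.IH)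
  next
    case False
    then have "kk i = k" "kk (Suc i) \<noteq> kk i"
      using Suc.prems kk_Suc[of i] by auto
    then show ?thesis
      using rejected[of i] accepted[of i] by auto
  qed
qed

lemma cut_depth_le_dist:
  obtains c where "c > 0"
    "\<And>l i. y i \<in> M (Suc l) \<Longrightarrow> c * norm (y l - z l (jsel l)) \<le> dist (y l) (y i)"
proof -
  obtain e where e: "e > 0" "\<And>j. j \<in> Jset m \<Longrightarrow> cball (v j) e \<subseteq> Dj fs j"
    using finite_common_cball_in_interior[of "Jset m" v "Dj fs"] finite_Jset v_interior by blast
  obtain B where B: "B > 0" "\<And>i. norm (y i) \<le> B"
    using y_bounded by (auto simp: bounded_pos)
  obtain V where V: "V > 0" "\<And>j. j \<in> Jset m \<Longrightarrow> norm (v j) \<le> V"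
    using finite_imp_bounded[OF finite_imageI[OF finite_Jset[of m], of v]] by (auto simp: bounded_pos)
  have yv: "norm (y i - v j) \<le> B + V" if "j \<in> Jset m" for i j
    using B(2)[of i] V(2)[OF that] norm_triangle_ineq4[of "y i" "v j"] by linarith
  have "e / (B + V) * norm (y l - z l (jsel l)) \<le> dist (y l) (y i)" if "y i \<in> M (Suc l)" for l i
  proof -
    let ?j = "jsel l"
    obtain a where a: "a \<in> A l ?j" "a \<in> W1 (z l ?j) (Dj fs ?j)"
      using cuts[of ?j l] jsel_farthest[of l] by blast
    have "e / (B + V) * norm (y l - z l ?j) \<le> inner a (y l - z l ?j)"
      using W1_inner_lower_bound[OF e(2) e(1) a(2)] z_step jsel_violated yv B(1) V(1) by auto
    also have "\<dots> \<le> inner a (y l - z l ?j) - inner a (y i - z l ?j)"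
      using that M_Suc[of l] a(1) jsel_farthest[of l] by auto
    also have "\<dots> = inner a (y l - y i)"
      by (simp add: inner_diff_right)
    also have "\<dots> \<le> norm a * norm (y l - y i)"
      by (rule norm_cauchy_schwarz)
    also have "\<dots> = dist (y l) (y i)"
      using a(2) by (simp add: W1_def dist_norm)
    finally show ?thesis .
  qed
  with that e(1) B(1) V(1) show thesis
    by (meson add_pos_pos divide_pos_pos)
qed

lemma cut_depth_bounded_below:
  assumes "\<epsilon> > 0"
  obtains \<delta> where "\<delta> > 0" "\<And>i. y i \<notin> Deps fs m \<epsilon> \<Longrightarrow> \<delta> \<le> norm (y i - z i (jsel i))"
proof -
  have "compact (closure (range y))"
    using y_bounded by (simp add: compact_closure)
  obtain d where d: "d > 0"
    "\<forall>j\<in>Jset m. \<forall>u\<in>closure (range y). \<forall>w. dist u w < d \<longrightarrow> dist (fs j u) (fs j w) < \<epsilon>"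
    using finite_uniform_modulus_near_compact[of _ _ fs, OF finite_Jset
        \<open>compact (closure (range y))\<close> continuous_constraint assms]
    by blast
  have "d / q \<le> norm (y i - z i (jsel i))" if infeasible: "y i \<notin> Deps fs m \<epsilon>" for i
  proof (rule ccontr)
    assume short: "\<not> d / q \<le> norm (y i - z i (jsel i))"
    obtain j where j: "j \<in> Jset m" "fs j (y i) > \<epsilon>"
      using Fmax_gt_imp_ex[OF Jset_nonempty, of \<epsilon> fs "y i"] infeasible by (auto simp: Deps_def)
    then have violated: "y i \<notin> Dj fs j"
      using assms by (auto simp: Dj_def)
    define w where "w = y i + qq i j *\<^sub>R (z i j - y i)"
    have w: "fs j w \<le> 0" "1 \<le> qq i j" "qq i j \<le> q"
      using z_step[OF j(1) violated] by (auto simp: w_def Dj_def)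
    have "norm (y i - z i j) \<le> norm (y i - z i (jsel i))"
      using jsel_farthest[of i] j(1) violated by blast
    with short have "norm (y i - z i j) < d / q"
      by linarith
    have "dist (y i) w = qq i j * norm (y i - z i j)"
      using w(2) by (simp add: w_def dist_norm norm_minus_commute)
    also have "\<dots> \<le> q * norm (y i - z i j)"
      using w(3) by (simp add: mult_right_mono)
    also have "\<dots> < q * (d / q)"
      using \<open>norm (y i - z i j) < d / q\<close> q_ge_1 by (simp add: pos_less_divide_eq ac_simps)
    also have "\<dots> = d"
      using q_ge_1 by simp
    finally have "dist (y i) w < d" .
    moreover have "y i \<in> closure (range y)"
      by (simp add: closure_def)
    ultimately have "dist (fs j (y i)) (fs j w) < \<epsilon>"
      using d(2) j(1) by blast
    with j(2) w(1) show False
      by (simp add: dist_real_def)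
  qed
  with d(1) q_ge_1 show thesis
    by (intro that[of "d / q"]) auto
qed

lemma kk_unbounded: "\<exists>i. k < kk i"
proof (rule ccontr)
  assume "\<nexists>i. k < kk i"
  then have "range kk \<subseteq> {..k}"
    by (auto simp: not_less)
  then have "finite (range kk)"
    by (rule finite_subset) simp
  then have "Max (range kk) \<in> range kk"
    by (intro Max_in) simp_all
  then obtain N where N: "kk N = Max (range kk)"
    by (metis rangeE)
  have kk_const: "kk i = kk N" if "N \<le> i" for i
  proof (rule antisym)
    show "kk i \<le> kk N"
      using N \<open>finite (range kk)\<close> by simp
    show "kk N \<le> kk i"
      using incseq_kk that by (simp add: incseq_def)
  qed
  have rejected_late: "y i \<notin> Deps fs m (eps (kk N))" if "N \<le> i" for i
    using accepted[of i] kk_const[OF that] kk_const[of "Suc i"] that by auto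
  have "M (N + Suc n) \<subseteq> M (N + n)" for n
    using M_Suc[of "N + n"] rejected[of "N + n"] rejected_late[of "N + n"] kk_const[of "N + n"] by auto
  then have M_antimono: "M i \<subseteq> M l" if "N \<le> l" "l \<le> i" for l i
    using lift_Suc_antimono_le[of "\<lambda>n. M (N + n)" "l - N" "i - N"] that by simp
  obtain c where c: "c > 0"
    "\<And>l i. y i \<in> M (Suc l) \<Longrightarrow> c * norm (y l - z l (jsel l)) \<le> dist (y l) (y i)"
    using cut_depth_le_dist by blast
  obtain \<delta> where \<delta>: "\<delta> > 0"
    "\<And>i. y i \<notin> Deps fs m (eps (kk N)) \<Longrightarrow> \<delta> \<le> norm (y i - z i (jsel i))"
    using cut_depth_bounded_below[OF eps_pos] by blast
  have separated: "c * norm (y l - z l (jsel l)) \<le> dist (y l) (y i)" if "N \<le> l" "l < i" for l i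
    using c(2) y_in_M[of i] M_antimono[of "Suc l" i] that by auto
  obtain l where "N \<le> l" "norm (y l - z l (jsel l)) < \<delta>"
    using bounded_seq_separation_small[OF y_bounded c(1) \<delta>(1) separated] by blast
  with \<delta>(2)[OF rejected_late] show False
    by fastforce
qed

lemma x_accepted: "\<exists>i. x k = y i \<and> y i \<in> Deps fs m (eps k)"
  using kk_unbounded accepted_iterate by blast

end

theorem theorem1p1p2:
  fixes fs :: "nat \<Rightarrow> 'a::euclidean_space \<Rightarrow> real"
    and m :: nat
    and f :: "'a \<Rightarrow> real"
    \<comment> \<open>data of one (non-terminating) run of Method 1.1\<close>
    and xstar :: 'a and v :: "nat \<Rightarrow> 'a" and q :: real
    and eps :: "nat \<Rightarrow> real"
    and M G Q :: "nat \<Rightarrow> 'a set"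
    and y :: "nat \<Rightarrow> 'a"
    and kk :: "nat \<Rightarrow> nat"
    and x :: "nat \<Rightarrow> 'a"
    and z :: "nat \<Rightarrow> nat \<Rightarrow> 'a" and qq :: "nat \<Rightarrow> nat \<Rightarrow> real"
    and H :: "nat \<Rightarrow> nat set" and jsel :: "nat \<Rightarrow> nat"
    and A :: "nat \<Rightarrow> nat \<Rightarrow> 'a set"
  \<comment> \<open>standing assumptions\<close>
  assumes m_pos: "m \<ge> 1"
    and conv: "\<And>j. j \<in> Jset m \<Longrightarrow> convex_on UNIV (fs j)"
    and fcont: "continuous_on UNIV f"
    and fmin: "\<exists>x0\<in>Dfeas fs m. \<forall>x\<in>Dfeas fs m. f x0 \<le> f x"
    and intD: "\<And>j. j \<in> Jset m \<Longrightarrow> interior (Dj fs j) \<noteq> {}"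
  \<comment> \<open>initialisation\<close>
    and xstar: "xstar \<in> Xstar f fs m"
    and M0: "closed (M 0)" "convex (M 0)" "xstar \<in> M 0"
    and v: "\<And>j. j \<in> Jset m \<Longrightarrow> v j \<in> interior (Dj fs j)"
    and q: "q \<ge> 1"
    and kk0: "kk 0 = 0"
  \<comment> \<open>Step 1\<close>
    and step1: "\<And>i. y i \<in> M i \<inter> Estar f fs m"
  \<comment> \<open>Step 2: the method does not terminate\<close>
    and step2: "\<And>i. {j \<in> Jset m. y i \<notin> Dj fs j} \<noteq> {}"
  \<comment> \<open>Step 3\<close>
    and step3a: "\<And>i. y i \<notin> Deps fs m (eps (kk i)) \<Longrightarrow>
        closed (G i) \<and> convex (G i) \<and> xstar \<in> G i \<and> Q i = M i \<inter> G i \<and> kk (Suc i) = kk i"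
    and step3b: "\<And>i. y i \<in> Deps fs m (eps (kk i)) \<Longrightarrow>
        x (kk i) = y i \<and> closed (Q i) \<and> convex (Q i) \<and> xstar \<in> Q i \<and> kk (Suc i) = Suc (kk i)"
  \<comment> \<open>Step 4\<close>
    and step4a: "\<And>i j. j \<in> Jset m \<Longrightarrow> y i \<notin> Dj fs j \<Longrightarrow>
        z i j \<in> open_segment (v j) (y i) \<and> z i j \<notin> interior (Dj fs j) \<and>
        1 \<le> qq i j \<and> qq i j \<le> q \<and> y i + qq i j *\<^sub>R (z i j - y i) \<in> Dj fs j"
    and step4b: "\<And>i j. j \<in> Jset m \<Longrightarrow> y i \<in> Dj fs j \<Longrightarrow> z i j = y i"
  \<comment> \<open>Step 5\<close>
    and step5: "\<And>i. H i \<subseteq> {j \<in> Jset m. y i \<notin> Dj fs j} \<and> jsel i \<in> H i \<and>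
        (\<forall>j \<in> {j \<in> Jset m. y i \<notin> Dj fs j}. norm (y i - z i j) \<le> norm (y i - z i (jsel i)))"
  \<comment> \<open>Step 6\<close>
    and step6: "\<And>i j. j \<in> H i \<Longrightarrow> finite (A i j) \<and> A i j \<noteq> {} \<and> A i j \<subseteq> W1 (z i j) (Dj fs j)"
    and Msuc: "\<And>i. M (Suc i) = Q i \<inter> {p. \<forall>j\<in>H i. \<forall>a\<in>A i j. inner a (p - z i j) \<le> 0}"
  \<comment> \<open>hypotheses of the theorem\<close>
    and ybdd: "bounded (range y)"
    and eps_pos: "\<And>k. eps k > 0"
    and eps_lim: "eps \<longlonglongrightarrow> 0"
  shows "(\<forall>k. \<exists>i. k < kk i)
      \<and> (\<forall>p. (\<exists>r. strict_mono r \<and> (x \<circ> r) \<longlonglongrightarrow> p) \<longrightarrow> p \<in> Xstar f fs m)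
      \<and> ((\<forall>k. f (x (Suc k)) \<ge> f (x k)) \<longrightarrow> (\<lambda>k. infdist (x k) (Xstar f fs m)) \<longlonglongrightarrow> 0)"
proof -
  interpret cutting_plane_run fs m v q eps M Q y kk x z qq H jsel A
    by unfold_locales
      (use conv v q kk0 step1 step3a step3b step4a step5 step6 Msuc ybdd eps_pos in auto)
  have x_good: "x k \<in> Deps fs m (eps k) \<inter> Estar f fs m" for k
    using x_accepted[of k] step1 by auto
  have "bdd_below (f ` Dfeas fs m)"
    using fmin by (auto simp: bdd_below_def)
  have limits: "p \<in> Xstar f fs m" if "strict_mono r" "(x \<circ> r) \<longlonglongrightarrow> p" for r p
    by (rule LIMSEQ_in_Xstar[OF _ fcont \<open>bdd_below _\<close> _ that(2)
          LIMSEQ_subseq_LIMSEQ[OF eps_lim that(1)]])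
      (use x_good in \<open>simp_all add: continuous_constraint\<close>)
  have "bounded (range x)"
    using x_accepted by (blast intro: bounded_subset[OF y_bounded])
  then show ?thesis
    using kk_unbounded limits infdist_tendsto_0_if_subseq_limits_in by blast
qed

end
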